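(* Let $(\varPhi,\overline{y})$ be a right normalized skew ruled surface in $\mathbb{E}^3$ with support function $q=\frac{f(u)+g(u)v}{w}$, neither $f$ nor $g$ the zero function. Then the following are equivalent: (a) $\overline{y}$ is a right normalization of the first type, i.e. the relative image $\varPhi^*=(U,\overline{y})$ degenerates into a curve; (b) $(\varPhi,\overline{y})$ is relatively minimal; (c) $g=\int\frac{\kappa f}{\delta}\,\mathrm{d}u+c$ for some $c\in\mathbb{R}$.
   Context: $\varPhi$ is a ruled $C^r$-surface ($r\ge3$) with nonvanishing Gaussian curvature, in standard parameters $\overline{x}(u,v)=\overline{s}(u)+v\,\overline{e}(u)$, $(u,v)\in U=I\times\mathbb{R}$, $|\overline{e}|=|\overline{e}'|=1$, $\langle\overline{s}',\overline{e}'\rangle=0$. Frame $\overline{n}=\overline{e}'$, $\overline{z}=\overline{e}\times\overline{n}$, $\overline{n}'=-\overline{e}+\kappa\overline{z}$, $\overline{z}'=-\kappa\overline{n}$. Invariants: $\delta=(\overline{s}',\overline{e},\overline{e}')\neq0$, $\kappa=(\overline{e},\overline{e}',\overline{e}'')$, $\lambda=\cot\sphericalangle(\overline{e},\overline{s}')$, $\overline{s}'=\delta\lambda\overline{e}+\delta\overline{z}$. $w=\sqrt{\delta^2+v^2}$, $\overline{\xi}=(\delta\overline{n}-v\overline{z})/w$. A relative normalization $\overline{y}$ is determined by its support function $q=\langle\overline{\xi},\overline{y}\rangle\neq0$; the right normalization with $q=(f+gv)/w$ ($f,g$ functions of $u$) is $\overline{y}=\frac{(\kappa f-\delta g')v+\delta'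 f-\delta f'-\delta^2\kappa g}{\delta^2}\overline{e}+\frac{f}{\delta}\overline{n}-g\overline{z}$. The relative shape operator is defined by $\overline{y}_{/i}=-B_i^j\overline{x}_{/j}$, the relative mean curvature is $H=\frac12(B_1^1+B_2^2)$, and $(\varPhi,\overline{y})$ is relatively minimal if $H\equiv0$. $\int\cdots\mathrm{d}u$ denotes an antiderivative. *)

theory Defs
  imports "HOL-Analysis.Analysis"
begin

definition Dv :: "(real \<Rightarrow> 'a::real_normed_vector) \<Rightarrow> real \<Rightarrow> 'a" where
  "Dv F t = vector_derivative F (at t)"

fun Ck_on :: "nat \<Rightarrow> (real \<Rightarrow> 'a::real_normed_vector) \<Rightarrow> real set \<Rightarrow> bool" where
  "Ck_on 0 F I = continuous_on I F"
| "Ck_on (Suc k) F I = ((\<forall>t\<in>I. F differentiable (at t)) \<and> Ck_on k (Dv F) I)"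

definition triple :: "real^3 \<Rightarrow> real^3 \<Rightarrow> real^3 \<Rightarrow> real" where
  "triple a b c = a \<bullet> cross3 b c"

definition rs_delta :: "(real \<Rightarrow> real^3) \<Rightarrow> (real \<Rightarrow> real^3) \<Rightarrow> real \<Rightarrow> real" where
  "rs_delta s e u = triple (Dv s u) (e u) (Dv e u)"

definition rs_kappa :: "(real \<Rightarrow> real^3) \<Rightarrow> real \<Rightarrow> real" where
  "rs_kappa e u = triple (e u) (Dv e u) (Dv (Dv e) u)"

definition rs_n :: "(real \<Rightarrow> real^3) \<Rightarrow> real \<Rightarrow> real^3" where
  "rs_n e u = Dv e u"

definition rs_z :: "(real \<Rightarrow> real^3) \<Rightarrow> real \<Rightarrow> real^3" where
  "rs_z e u = cross3 (e u) (Dv e u)"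

definition ruled_x :: "(real \<Rightarrow> real^3) \<Rightarrow> (real \<Rightarrow> real^3) \<Rightarrow> real \<Rightarrow> real \<Rightarrow> real^3" where
  "ruled_x s e u v = s u + v *\<^sub>R e u"

text \<open>The right normalization with support function q = (f + g v)/w.\<close>
definition right_norm ::
  "(real \<Rightarrow> real^3) \<Rightarrow> (real \<Rightarrow> real^3) \<Rightarrow> (real \<Rightarrow> real) \<Rightarrow> (real \<Rightarrow> real)
     \<Rightarrow> real \<Rightarrow> real \<Rightarrow> real^3" where
  "right_norm s e f g u v =
     (let \<delta> = rs_delta s e u; \<kappa> = rs_kappa e u in
       (((\<kappa> * f u - \<delta> * Dv g u) * v + Dv (rs_delta s e) u * f u - \<delta> * Dv f u
          - \<delta>^2 * \<kappa> * g u) / \<delta>^2) *\<^sub>R e u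
       + (f u / \<delta>) *\<^sub>R rs_n e u - g u *\<^sub>R rs_z e u)"

definition pd_u :: "(real \<Rightarrow> real \<Rightarrow> real^3) \<Rightarrow> real \<Rightarrow> real \<Rightarrow> real^3" where
  "pd_u F u v = vector_derivative (\<lambda>t. F t v) (at u)"

definition pd_v :: "(real \<Rightarrow> real \<Rightarrow> real^3) \<Rightarrow> real \<Rightarrow> real \<Rightarrow> real^3" where
  "pd_v F u v = vector_derivative (\<lambda>t. F u t) (at v)"

text \<open>B is the relative shape operator at (u,v):  y_/i = - B_i^j x_/j
  (index 1 = u, index 2 = v; B $ i $ j = B_i^j).\<close>
definition is_rel_shape_op ::
  "(real \<Rightarrow> real \<Rightarrow> real^3) \<Rightarrow> (real \<Rightarrow> real \<Rightarrow> real^3) \<Rightarrow> real \<Rightarrow> real \<Rightarrow> real^2^2 \<Rightarrow> bool" where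
  "is_rel_shape_op x y u v B \<longleftrightarrow>
     pd_u y u v = - (B$1$1 *\<^sub>R pd_u x u v + B$1$2 *\<^sub>R pd_v x u v) \<and>
     pd_v y u v = - (B$2$1 *\<^sub>R pd_u x u v + B$2$2 *\<^sub>R pd_v x u v)"

definition rel_mean_curv ::
  "(real \<Rightarrow> real \<Rightarrow> real^3) \<Rightarrow> (real \<Rightarrow> real \<Rightarrow> real^3) \<Rightarrow> real \<Rightarrow> real \<Rightarrow> real" where
  "rel_mean_curv x y u v = (let B = (THE B. is_rel_shape_op x y u v B) in (B$1$1 + B$2$2) / 2)"

definition relatively_minimal ::
  "(real \<Rightarrow> real \<Rightarrow> real^3) \<Rightarrow> (real \<Rightarrow> real \<Rightarrow> real^3) \<Rightarrow> (real \<times> real) set \<Rightarrow> bool" where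
  "relatively_minimal x y U \<longleftrightarrow> (\<forall>(u,v)\<in>U. rel_mean_curv x y u v = 0)"

definition degenerates_to_curve :: "(real \<Rightarrow> real \<Rightarrow> real^3) \<Rightarrow> (real \<times> real) set \<Rightarrow> bool" where
  "degenerates_to_curve y U \<longleftrightarrow> (\<forall>(u,v)\<in>U. dim (span {pd_u y u v, pd_v y u v}) \<le> 1)"

end

theory Submission
  imports Defs
begin

text \<open>In the frame \<open>(e, n, z)\<close> of the ruled surface the right normalization is affine along
  each ruling, and a direct computation gives \<open>y\<^sub>v = -H e\<close> and \<open>y\<^sub>u = -H x\<^sub>u - c e\<close> with
  \<open>H = (\<delta> g' - \<kappa> f) / \<delta>\<^sup>2\<close>. Since \<open>x\<^sub>v = e\<close>, the relative shape operator is triangular with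
  both diagonal entries \<open>H\<close>, so \<open>H\<close> is the relative mean curvature. The relative image has rank
  at most one exactly where \<open>H\<close> vanishes: \<open>y\<^sub>v\<close> is parallel to \<open>e\<close>, while \<open>y\<^sub>u\<close> has component
  \<open>-H \<delta>\<close> along \<open>z\<close>. Finally \<open>H \<equiv> 0\<close> says precisely that \<open>g' = \<kappa> f / \<delta>\<close>.\<close>

lemma Ck_on_Suc_imp_Ck_on: "Ck_on (Suc k) F I \<Longrightarrow> Ck_on k F I"
proof (induction k arbitrary: F)
  case 0
  then show ?case
    by (auto intro!: differentiable_imp_continuous_on
        simp: differentiable_on_def differentiable_at_withinI)
next
  case (Suc k)
  then show ?case by auto
qed

lemma Ck_on_mono: "k \<le> m \<Longrightarrow> Ck_on m F I \<Longrightarrow> Ck_on k F I"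
proof (induction m)
  case 0
  then show ?case by simp
next
  case (Suc m)
  then show ?case using Ck_on_Suc_imp_Ck_on le_Suc_eq by blast
qed

lemma Ck_on_2_differentiable:
  "Ck_on 2 F I \<Longrightarrow> t \<in> I \<Longrightarrow> F differentiable (at t) \<and> Dv F differentiable (at t)"
  by (simp add: numeral_2_eq_2)

lemma Ck_on_3_differentiable:
  "Ck_on 3 F I \<Longrightarrow> t \<in> I \<Longrightarrow>
     F differentiable (at t) \<and> Dv F differentiable (at t) \<and> Dv (Dv F) differentiable (at t)"
  by (simp add: numeral_3_eq_3)

lemma Dv_has_vector_derivative:
  "F differentiable (at t) \<Longrightarrow> (F has_vector_derivative Dv F t) (at t)"
  unfolding Dv_def by (simp add: vector_derivative_works)

lemma Dv_has_real_derivative: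
  "(F :: real \<Rightarrow> real) differentiable (at t) \<Longrightarrow> (F has_real_derivative Dv F t) (at t)"
  using Dv_has_vector_derivative has_real_derivative_iff_has_vector_derivative by blast

lemma Dv_eqI: "(F has_vector_derivative F') (at t) \<Longrightarrow> Dv F t = F'"
  unfolding Dv_def by (rule vector_derivative_at)

lemma has_vector_derivative_cross3:
  assumes "(F has_vector_derivative F') (at t)" "(G has_vector_derivative G') (at t)"
  shows "((\<lambda>t. cross3 (F t) (G t)) has_vector_derivative cross3 (F t) G' + cross3 F' (G t)) (at t)"
  using bilinear_cross bilinear_conv_bounded_bilinear bounded_bilinear.has_vector_derivative assms
  by blast

lemma has_real_derivative_inner:
  fixes F G :: "real \<Rightarrow> 'a::real_inner"
  assumes "(F has_vector_derivative F') (at t)" "(G has_vector_derivative G') (at t)"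
  shows "((\<lambda>t. F t \<bullet> G t) has_real_derivative F t \<bullet> G' + F' \<bullet> G t) (at t)"
  using bounded_bilinear.has_vector_derivative[OF bounded_bilinear_inner assms]
  by (simp add: has_real_derivative_iff_has_vector_derivative)

lemma differentiable_cross3:
  fixes F G :: "real \<Rightarrow> real^3"
  assumes "F differentiable (at t)" "G differentiable (at t)"
  shows "(\<lambda>t. cross3 (F t) (G t)) differentiable (at t)"
  using has_vector_derivative_cross3[OF Dv_has_vector_derivative Dv_has_vector_derivative, OF assms]
  by (rule differentiableI_vector)

lemma has_real_derivative_zero_if_constant_on_open:
  assumes "(\<phi> has_real_derivative d) (at u)" "open I" "u \<in> I" "\<And>t. t \<in> I \<Longrightarrow> \<phi> t = c"
  shows "d = 0"
proof -
  have "((\<lambda>_. c) has_real_derivative d) (at u)"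
    using has_field_derivative_transform_within_open[OF assms(1-3)] assms(4) by auto
  then show ?thesis using DERIV_const DERIV_unique by blast
qed

lemma inner_cross3_cross3:
  "cross3 a b \<bullet> cross3 c d = (a \<bullet> c) * (b \<bullet> d) - (a \<bullet> d) * (b \<bullet> c)"
  by (simp add: cross3_simps)

lemma cross3_cross3_right: "cross3 d (cross3 a b) = (d \<bullet> b) *\<^sub>R a - (d \<bullet> a) *\<^sub>R b"
  by (simp add: cross3_simps forall_3)

lemma orthonormal_frame_expansion:
  fixes a b d :: "real^3"
  assumes "a \<bullet> a = 1" "b \<bullet> b = 1" "a \<bullet> b = 0"
  shows "d = (d \<bullet> a) *\<^sub>R a + (d \<bullet> b) *\<^sub>R b + (d \<bullet> cross3 a b) *\<^sub>R cross3 a b"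
proof -
  define z where "z = cross3 a b"
  define r where "r = d - ((d \<bullet> a) *\<^sub>R a + (d \<bullet> b) *\<^sub>R b + (d \<bullet> z) *\<^sub>R z)"
  have z: "z \<bullet> z = 1" "z \<bullet> a = 0" "z \<bullet> b = 0"
    using inner_cross3_cross3[of a b a b] assms
    by (simp_all add: z_def inner_commute dot_cross_self)
  have "b \<bullet> a = 0" using assms(3) by (simp add: inner_commute)
  then have "r \<bullet> a = 0" "r \<bullet> b = 0" "r \<bullet> z = 0"
    using assms z by (simp_all add: r_def inner_diff_left inner_add_left inner_commute[of a z]
        inner_commute[of b z])
  then have "cross3 r z = 0"
    by (simp add: z_def cross3_cross3_right)
  then have "r = 0"
    using cross3_cross3_right[of z r z] z \<open>r \<bullet> z = 0\<close> by (simp add: inner_commute)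
  then show ?thesis by (simp add: r_def z_def)
qed

lemma dim_span_pair_le_1_imp_in_span:
  assumes "dim (span {a, b}) \<le> 1" "b \<noteq> 0"
  shows "a \<in> span {b}"
proof (rule ccontr)
  assume a: "a \<notin> span {b}"
  have "independent {b}" using assms(2) by (simp add: independent_insertI independent_empty)
  with a have "independent {a, b}" by (rule independent_insertI)
  moreover have "a \<noteq> b" using a span_base by blast
  ultimately have "dim (span {a, b}) = 2" by (simp add: dim_eq_card_independent)
  with assms(1) show False by simp
qed

lemma antiderivative_shift_iff:
  assumes "open I" "\<And>u. u \<in> I \<Longrightarrow> (g has_real_derivative g' u) (at u)"
  shows "(\<forall>u\<in>I. g' u = \<phi> u) \<longleftrightarrow>
    (\<exists>F c. (\<forall>u\<in>I. (F has_real_derivative \<phi> u) (at u)) \<and> (\<forall>u\<in>I. g u = F u + c))"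
proof
  assume "\<forall>u\<in>I. g' u = \<phi> u"
  then have "(\<forall>u\<in>I. (g has_real_derivative \<phi> u) (at u)) \<and> (\<forall>u\<in>I. g u = g u + 0)"
    using assms(2) by auto
  then show "\<exists>F c. (\<forall>u\<in>I. (F has_real_derivative \<phi> u) (at u)) \<and> (\<forall>u\<in>I. g u = F u + c)"
    by blast
next
  assume "\<exists>F c. (\<forall>u\<in>I. (F has_real_derivative \<phi> u) (at u)) \<and> (\<forall>u\<in>I. g u = F u + c)"
  then obtain F c where F: "\<forall>u\<in>I. (F has_real_derivative \<phi> u) (at u)"
    and g: "\<forall>u\<in>I. g u = F u + c" by blast
  show "\<forall>u\<in>I. g' u = \<phi> u"
  proof
    fix u assume u: "u \<in> I"
    have "((\<lambda>t. F t + c) has_real_derivative \<phi> u) (at u)"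
      using F u by (auto intro!: derivative_eq_intros)
    then have "(g has_real_derivative \<phi> u) (at u)"
      by (rule has_field_derivative_transform_within_open[OF _ assms(1) u]) (use g in auto)
    then show "g' u = \<phi> u" using assms(2)[OF u] DERIV_unique by blast
  qed
qed


lemma inner_cross3_left_cyclic: "cross3 a b \<bullet> c = a \<bullet> cross3 b c"
  by (simp add: cross3_simps)

lemma inner_cross3_left_swap: "cross3 a c \<bullet> b = - (a \<bullet> cross3 b c)"
  by (simp add: cross3_simps)

locale unit_ruling =
  fixes e :: "real \<Rightarrow> real^3" and I :: "real set"
  assumes open_I: "open I"
    and e_C2: "Ck_on 2 e I"
    and unit_e: "\<And>t. t \<in> I \<Longrightarrow> norm (e t) = 1"
    and unit_Dv_e: "\<And>t. t \<in> I \<Longrightarrow> norm (Dv e t) = 1"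
begin

lemma e_has_vector_derivative: "u \<in> I \<Longrightarrow> (e has_vector_derivative Dv e u) (at u)"
  and Dv_e_has_vector_derivative: "u \<in> I \<Longrightarrow> (Dv e has_vector_derivative Dv (Dv e) u) (at u)"
  using Ck_on_2_differentiable[OF e_C2] Dv_has_vector_derivative by blast+

lemma frame_inner:
  assumes u: "u \<in> I"
  shows "e u \<bullet> e u = 1" "Dv e u \<bullet> Dv e u = 1" "e u \<bullet> Dv e u = 0"
    "Dv e u \<bullet> Dv (Dv e) u = 0" "e u \<bullet> Dv (Dv e) u = -1"
proof -
  have unit: "\<And>t. t \<in> I \<Longrightarrow> e t \<bullet> e t = 1" "\<And>t. t \<in> I \<Longrightarrow> Dv e t \<bullet> Dv e t = 1"
    using unit_e unit_Dv_e by (auto simp: norm_eq_1)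
  then show "e u \<bullet> e u = 1" "Dv e u \<bullet> Dv e u = 1" using u by auto
  note e' = e_has_vector_derivative and e'' = Dv_e_has_vector_derivative
  have orth: "e t \<bullet> Dv e t = 0" if t: "t \<in> I" for t
    using has_real_derivative_zero_if_constant_on_open[OF
        has_real_derivative_inner[OF e'[OF t] e'[OF t]] open_I t unit(1)]
    by (simp add: inner_commute)
  then show "e u \<bullet> Dv e u = 0" using u .
  show "Dv e u \<bullet> Dv (Dv e) u = 0"
    using has_real_derivative_zero_if_constant_on_open[OF
        has_real_derivative_inner[OF e''[OF u] e''[OF u]] open_I u unit(2)]
    by (simp add: inner_commute)
  show "e u \<bullet> Dv (Dv e) u = -1"
    using has_real_derivative_zero_if_constant_on_open[OF
        has_real_derivative_inner[OF e'[OF u] e''[OF u]] open_I u orth] unit(2)[OF u]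
    by simp
qed

lemma rs_n_has_vector_derivative:
  assumes u: "u \<in> I"
  shows "(rs_n e has_vector_derivative - e u + rs_kappa e u *\<^sub>R rs_z e u) (at u)"
proof -
  note frame = frame_inner[OF u]
  have "Dv (Dv e) u \<bullet> e u = -1" "Dv (Dv e) u \<bullet> Dv e u = 0"
    using frame(4,5) by (simp_all add: inner_commute)
  moreover have "Dv (Dv e) u \<bullet> cross3 (e u) (Dv e u) = rs_kappa e u"
    using inner_cross3_left_cyclic[of "e u" "Dv e u" "Dv (Dv e) u"]
    by (simp add: rs_kappa_def triple_def inner_commute)
  ultimately have "Dv (Dv e) u = - e u + rs_kappa e u *\<^sub>R rs_z e u"
    using orthonormal_frame_expansion[OF frame(1-3), of "Dv (Dv e) u"]
    by (simp add: rs_z_def)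
  moreover have "rs_n e = Dv e" by (simp add: fun_eq_iff rs_n_def)
  ultimately show ?thesis using Dv_e_has_vector_derivative[OF u] by simp
qed

lemma rs_z_has_vector_derivative:
  assumes u: "u \<in> I"
  shows "(rs_z e has_vector_derivative - rs_kappa e u *\<^sub>R rs_n e u) (at u)"
proof -
  note frame = frame_inner[OF u]
  define w where "w = cross3 (e u) (Dv (Dv e) u)"
  have "w \<bullet> e u = 0"
    by (simp add: w_def dot_cross_self)
  moreover have "w \<bullet> Dv e u = - rs_kappa e u"
    by (simp add: w_def rs_kappa_def triple_def inner_cross3_left_swap)
  moreover have "w \<bullet> cross3 (e u) (Dv e u) = 0"
    using frame by (simp add: w_def inner_cross3_cross3 inner_commute)
  ultimately have w: "w = - rs_kappa e u *\<^sub>R rs_n e u"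
    using orthonormal_frame_expansion[OF frame(1-3), of w] by (simp add: rs_n_def)
  have "((\<lambda>t. cross3 (e t) (Dv e t)) has_vector_derivative w) (at u)"
    using has_vector_derivative_cross3[OF e_has_vector_derivative[OF u]
        Dv_e_has_vector_derivative[OF u]]
    by (simp add: w_def)
  then show ?thesis using w by (simp add: rs_z_def[abs_def])
qed

lemma frame_combination_has_vector_derivative:
  assumes u: "u \<in> I"
    and "(\<alpha> has_real_derivative \<alpha>') (at u)" "(\<beta> has_real_derivative \<beta>') (at u)"
      "(\<gamma> has_real_derivative \<gamma>') (at u)"
  shows "((\<lambda>t. \<alpha> t *\<^sub>R e t + \<beta> t *\<^sub>R rs_n e t + \<gamma> t *\<^sub>R rs_z e t) has_vector_derivative
      (\<alpha>' - \<beta> u) *\<^sub>R e u + (\<alpha> u + \<beta>' - rs_kappa e u * \<gamma> u) *\<^sub>R rs_n e u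
      + (rs_kappa e u * \<beta> u + \<gamma>') *\<^sub>R rs_z e u) (at u)"
proof -
  have "Dv e u = rs_n e u" by (simp add: rs_n_def)
  then have "((\<lambda>t. \<alpha> t *\<^sub>R e t + \<beta> t *\<^sub>R rs_n e t + \<gamma> t *\<^sub>R rs_z e t) has_vector_derivative
      (\<alpha> u *\<^sub>R rs_n e u + \<alpha>' *\<^sub>R e u)
      + (\<beta> u *\<^sub>R (- e u + rs_kappa e u *\<^sub>R rs_z e u) + \<beta>' *\<^sub>R rs_n e u)
      + (\<gamma> u *\<^sub>R (- rs_kappa e u *\<^sub>R rs_n e u) + \<gamma>' *\<^sub>R rs_z e u)) (at u)"
    using e_has_vector_derivative[OF u] rs_n_has_vector_derivative[OF u]
      rs_z_has_vector_derivative[OF u] assms(2-4)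
    by (intro has_vector_derivative_add has_vector_derivative_scaleR) simp_all
  moreover have "(\<alpha> u *\<^sub>R rs_n e u + \<alpha>' *\<^sub>R e u)
      + (\<beta> u *\<^sub>R (- e u + rs_kappa e u *\<^sub>R rs_z e u) + \<beta>' *\<^sub>R rs_n e u)
      + (\<gamma> u *\<^sub>R (- rs_kappa e u *\<^sub>R rs_n e u) + \<gamma>' *\<^sub>R rs_z e u)
    = (\<alpha>' - \<beta> u) *\<^sub>R e u + (\<alpha> u + \<beta>' - rs_kappa e u * \<gamma> u) *\<^sub>R rs_n e u
      + (rs_kappa e u * \<beta> u + \<gamma>') *\<^sub>R rs_z e u"
    by (simp add: algebra_simps)
  ultimately show ?thesis by simp
qed

end

lemma pd_v_ruled_x: "pd_v (ruled_x s e) u v = e u"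
proof -
  have "((\<lambda>t. s u + t *\<^sub>R e u) has_vector_derivative e u) (at v)"
    by (auto intro!: derivative_eq_intros)
  then show ?thesis unfolding pd_v_def ruled_x_def by (rule vector_derivative_at)
qed

lemma pd_u_ruled_x:
  assumes "s differentiable (at u)" "e differentiable (at u)"
  shows "pd_u (ruled_x s e) u v = Dv s u + v *\<^sub>R Dv e u"
proof -
  have "((\<lambda>t. s t + v *\<^sub>R e t) has_vector_derivative Dv s u + (v *\<^sub>R Dv e u + 0 *\<^sub>R e u)) (at u)"
    using assms by (intro has_vector_derivative_add has_vector_derivative_scaleR DERIV_const
        Dv_has_vector_derivative)
  then have "((\<lambda>t. s t + v *\<^sub>R e t) has_vector_derivative Dv s u + v *\<^sub>R Dv e u) (at u)"
    by simp
  then show ?thesis unfolding pd_u_def ruled_x_def by (rule vector_derivative_at)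
qed

locale skew_ruled_surface = unit_ruling +
  fixes s :: "real \<Rightarrow> real^3"
  assumes s_C3: "Ck_on 3 s I" and e_C3: "Ck_on 3 e I"
    and striction: "\<And>t. t \<in> I \<Longrightarrow> Dv s t \<bullet> Dv e t = 0"
    and skew: "\<And>t. t \<in> I \<Longrightarrow> rs_delta s e t \<noteq> 0"
begin

lemma delta_kappa_differentiable:
  assumes u: "u \<in> I"
  shows "rs_delta s e differentiable (at u)" "Dv (rs_delta s e) differentiable (at u)"
    "rs_kappa e differentiable (at u)"
proof -
  define \<delta>' where "\<delta>' t = Dv s t \<bullet> (cross3 (e t) (Dv (Dv e) t) + cross3 (Dv e t) (Dv e t))
      + Dv (Dv s) t \<bullet> cross3 (e t) (Dv e t)" for t
  have \<delta>: "(rs_delta s e has_real_derivative \<delta>' t) (at t)" if t: "t \<in> I" for t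
    unfolding \<delta>'_def rs_delta_def triple_def
    using Ck_on_3_differentiable[OF s_C3 t] Ck_on_3_differentiable[OF e_C3 t]
    by (intro has_real_derivative_inner has_vector_derivative_cross3 Dv_has_vector_derivative) auto
  then show "rs_delta s e differentiable (at u)"
    using u by (meson differentiableI_vector has_real_derivative_iff_has_vector_derivative)
  have "\<delta>' differentiable (at u)"
    unfolding \<delta>'_def using Ck_on_3_differentiable[OF s_C3 u] Ck_on_3_differentiable[OF e_C3 u]
    by (intro differentiable_add differentiable_inner differentiable_cross3) auto
  moreover have "\<delta>' t = Dv (rs_delta s e) t" if "t \<in> I" for t
    using \<delta>[OF that] by (simp add: Dv_eqI has_real_derivative_iff_has_vector_derivative)
  ultimately show "Dv (rs_delta s e) differentiable (at u)"
    using Dv_has_vector_derivative has_vector_derivative_transform_within_open[OF _ open_I u]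
    by (metis differentiableI_vector)
  show "rs_kappa e differentiable (at u)"
    unfolding rs_kappa_def triple_def using Ck_on_3_differentiable[OF e_C3 u]
    by (intro differentiable_inner differentiable_cross3) auto
qed

lemma Dv_s_frame:
  assumes u: "u \<in> I"
  shows "Dv s u = (Dv s u \<bullet> e u) *\<^sub>R e u + rs_delta s e u *\<^sub>R rs_z e u"
  using orthonormal_frame_expansion[OF frame_inner(1-3)[OF u], of "Dv s u"] striction[OF u]
  by (simp add: rs_delta_def triple_def rs_z_def)

lemma pd_u_ruled_x_frame:
  assumes u: "u \<in> I"
  shows "pd_u (ruled_x s e) u v = Dv s u + v *\<^sub>R rs_n e u"
  using pd_u_ruled_x Ck_on_3_differentiable[OF s_C3 u] Ck_on_3_differentiable[OF e_C3 u]
  by (simp add: rs_n_def)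

lemma pd_u_ruled_x_inner_rs_z:
  assumes u: "u \<in> I"
  shows "pd_u (ruled_x s e) u v \<bullet> rs_z e u = rs_delta s e u"
  using pd_u_ruled_x_frame[OF u]
  by (simp add: inner_add_left rs_n_def rs_z_def rs_delta_def triple_def dot_cross_self)

lemma ruled_x_tangents_independent:
  assumes u: "u \<in> I" and ab: "a *\<^sub>R pd_u (ruled_x s e) u v + b *\<^sub>R pd_v (ruled_x s e) u v = 0"
  shows "a = 0 \<and> b = 0"
proof -
  have "(a *\<^sub>R pd_u (ruled_x s e) u v + b *\<^sub>R e u) \<bullet> rs_z e u = a * rs_delta s e u"
    using pd_u_ruled_x_inner_rs_z[OF u] by (simp add: inner_add_left rs_z_def dot_cross_self)
  then have "a = 0" using ab skew[OF u] by (simp add: pd_v_ruled_x)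
  moreover have "e u \<noteq> 0" using unit_e[OF u] by auto
  ultimately show ?thesis using ab by (simp add: pd_v_ruled_x)
qed

end

definition right_norm_mean_curv ::
  "(real \<Rightarrow> real^3) \<Rightarrow> (real \<Rightarrow> real^3) \<Rightarrow> (real \<Rightarrow> real) \<Rightarrow> (real \<Rightarrow> real) \<Rightarrow> real \<Rightarrow> real"
  where "right_norm_mean_curv s e f g u =
    (rs_delta s e u * Dv g u - rs_kappa e u * f u) / (rs_delta s e u)\<^sup>2"

lemma pd_v_right_norm: "pd_v (right_norm s e f g) u v = - right_norm_mean_curv s e f g u *\<^sub>R e u"
proof -
  define \<delta> where "\<delta> = rs_delta s e u"
  define \<alpha> where "\<alpha> = rs_kappa e u * f u - \<delta> * Dv g u"
  define \<beta> where "\<beta> = Dv (rs_delta s e) u * f u - \<delta> * Dv f u - \<delta>\<^sup>2 * rs_kappa e u * g u"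
  define K where "K = (f u / \<delta>) *\<^sub>R rs_n e u - g u *\<^sub>R rs_z e u"
  define a where "a = \<alpha> / \<delta>\<^sup>2"
  define b where "b = \<beta> / \<delta>\<^sup>2"
  have "right_norm s e f g u = (\<lambda>t. ((\<alpha> * t + \<beta>) / \<delta>\<^sup>2) *\<^sub>R e u + K)"
    by (simp add: right_norm_def Let_def fun_eq_iff \<alpha>_def \<beta>_def K_def \<delta>_def)
  also have "\<dots> = (\<lambda>t. (a * t + b) *\<^sub>R e u + K)"
    by (simp add: a_def b_def add_divide_distrib)
  finally have "pd_v (right_norm s e f g) u v = a *\<^sub>R e u"
    unfolding pd_v_def by (intro vector_derivative_at) (auto intro!: derivative_eq_intros)
  moreover have "a = - right_norm_mean_curv s e f g u"
    unfolding right_norm_mean_curv_def a_def \<alpha>_def \<delta>_def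
    by (simp only: minus_divide_left minus_diff_eq)
  ultimately show ?thesis by simp
qed

lemma rel_mean_curv_eqI:
  assumes B: "is_rel_shape_op x y u v B"
    and independent: "\<And>a b. a *\<^sub>R pd_u x u v + b *\<^sub>R pd_v x u v = 0 \<Longrightarrow> a = 0 \<and> b = 0"
  shows "rel_mean_curv x y u v = (B$1$1 + B$2$2) / 2"
proof -
  have "B' = B" if B': "is_rel_shape_op x y u v B'" for B'
  proof -
    have "(B$i$1 - B'$i$1) *\<^sub>R pd_u x u v + (B$i$2 - B'$i$2) *\<^sub>R pd_v x u v = 0"
      if "i = 1 \<or> i = 2" for i
      using that B B' unfolding is_rel_shape_op_def
      by (auto simp: scaleR_diff_left algebra_simps)
    then have "B$i$j = B'$i$j" if "i = 1 \<or> i = 2" "j = 1 \<or> j = 2" for i j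
      using that independent by fastforce
    then show ?thesis by (simp add: vec_eq_iff forall_2)
  qed
  then have "(THE B. is_rel_shape_op x y u v B) = B"
    using B by blast
  then show ?thesis unfolding rel_mean_curv_def by simp
qed

locale right_normalized_skew_ruled_surface = skew_ruled_surface +
  fixes f g :: "real \<Rightarrow> real"
  assumes f_C2: "Ck_on 2 f I" and g_C2: "Ck_on 2 g I"
begin

abbreviation "H \<equiv> right_norm_mean_curv s e f g"

lemma g_has_real_derivative: "u \<in> I \<Longrightarrow> (g has_real_derivative Dv g u) (at u)"
  using Ck_on_2_differentiable[OF g_C2] Dv_has_real_derivative by blast

lemma pd_u_right_norm:
  assumes u: "u \<in> I"
  obtains c where "pd_u (right_norm s e f g) u v = - (H u *\<^sub>R pd_u (ruled_x s e) u v + c *\<^sub>R e u)"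
proof -
  define \<delta> where "\<delta> = rs_delta s e"
  define \<kappa> where "\<kappa> = rs_kappa e"
  have d0: "\<delta> u \<noteq> 0" using skew[OF u] by (simp add: \<delta>_def)
  define A where "A t = ((\<kappa> t * f t - \<delta> t * Dv g t) * v + Dv \<delta> t * f t
      - \<delta> t * Dv f t - (\<delta> t)\<^sup>2 * \<kappa> t * g t) / (\<delta> t)\<^sup>2" for t
  define \<beta>' where "\<beta>' = (Dv f u * \<delta> u - f u * Dv \<delta> u) / (\<delta> u * \<delta> u)"
  have y: "(\<lambda>t. right_norm s e f g t v)
      = (\<lambda>t. A t *\<^sub>R e t + (f t / \<delta> t) *\<^sub>R rs_n e t + (- g t) *\<^sub>R rs_z e t)"
    by (simp add: right_norm_def Let_def A_def fun_eq_iff \<delta>_def \<kappa>_def)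
  note \<delta>\<kappa> = delta_kappa_differentiable[OF u, folded \<delta>_def \<kappa>_def]
  note f = Ck_on_2_differentiable[OF f_C2 u] and g = Ck_on_2_differentiable[OF g_C2 u]
  have "A differentiable (at u)"
    unfolding A_def using \<delta>\<kappa> f g d0
    by (intro differentiable_divide differentiable_add differentiable_diff differentiable_mult
        differentiable_power differentiable_const) auto
  then have \<alpha>_deriv: "(A has_real_derivative Dv A u) (at u)" by (rule Dv_has_real_derivative)
  have \<beta>_deriv: "((\<lambda>t. f t / \<delta> t) has_real_derivative \<beta>') (at u)"
    unfolding \<beta>'_def
    using DERIV_divide[OF Dv_has_real_derivative[OF conjunct1[OF f]]
        Dv_has_real_derivative[OF \<delta>\<kappa>(1)] d0] by simp
  have \<gamma>_deriv: "((\<lambda>t. - g t) has_real_derivative - Dv g u) (at u)"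
    using g_has_real_derivative[OF u] by (rule DERIV_minus)
  define a where "a = Dv A u - f u / \<delta> u"
  have "pd_u (right_norm s e f g) u v = a *\<^sub>R e u + (A u + \<beta>' - \<kappa> u * - g u) *\<^sub>R rs_n e u
      + (\<kappa> u * (f u / \<delta> u) + - Dv g u) *\<^sub>R rs_z e u"
    unfolding pd_u_def y a_def
    using frame_combination_has_vector_derivative[OF u \<alpha>_deriv \<beta>_deriv \<gamma>_deriv, folded \<kappa>_def] by (rule vector_derivative_at)
  also have "A u + \<beta>' - \<kappa> u * - g u = - H u * v"
    using d0 by (simp add: A_def \<beta>'_def right_norm_mean_curv_def \<delta>_def \<kappa>_def field_simps power2_eq_square)
  also have "\<kappa> u * (f u / \<delta> u) + - Dv g u = - H u * \<delta> u"
    using d0 by (simp add: right_norm_mean_curv_def \<delta>_def \<kappa>_def field_simps power2_eq_square)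
  finally have "pd_u (right_norm s e f g) u v
      = a *\<^sub>R e u - H u *\<^sub>R (v *\<^sub>R rs_n e u + \<delta> u *\<^sub>R rs_z e u)"
    by (simp add: algebra_simps)
  also have "v *\<^sub>R rs_n e u + \<delta> u *\<^sub>R rs_z e u
      = pd_u (ruled_x s e) u v - (Dv s u \<bullet> e u) *\<^sub>R e u"
    using pd_u_ruled_x_frame[OF u] Dv_s_frame[OF u] unfolding \<delta>_def by (simp add: algebra_simps)
  finally have "pd_u (right_norm s e f g) u v
      = - (H u *\<^sub>R pd_u (ruled_x s e) u v + (- a - H u * (Dv s u \<bullet> e u)) *\<^sub>R e u)"
    by (simp add: algebra_simps)
  then show ?thesis by (rule that)
qed

lemma rel_mean_curv_right_norm:
  assumes u: "u \<in> I"
  shows "rel_mean_curv (ruled_x s e) (right_norm s e f g) u v = H u"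
proof -
  obtain c where c: "pd_u (right_norm s e f g) u v = - (H u *\<^sub>R pd_u (ruled_x s e) u v + c *\<^sub>R e u)"
    using pd_u_right_norm[OF u] .
  have "is_rel_shape_op (ruled_x s e) (right_norm s e f g) u v (vector [vector [H u, c], vector [0, H u]])"
    unfolding is_rel_shape_op_def using c by (simp add: pd_v_right_norm pd_v_ruled_x)
  from rel_mean_curv_eqI[OF this ruled_x_tangents_independent[OF u]] show ?thesis by simp
qed

lemma right_norm_rank_le_1_iff:
  assumes u: "u \<in> I"
  shows "dim (span {pd_u (right_norm s e f g) u v, pd_v (right_norm s e f g) u v}) \<le> 1 \<longleftrightarrow> H u = 0"
proof
  assume "H u = 0"
  then have "{pd_u (right_norm s e f g) u v, pd_v (right_norm s e f g) u v}
      = insert 0 {pd_u (right_norm s e f g) u v}"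
    by (auto simp: pd_v_right_norm)
  then show "dim (span {pd_u (right_norm s e f g) u v, pd_v (right_norm s e f g) u v}) \<le> 1"
    by simp
next
  assume rank: "dim (span {pd_u (right_norm s e f g) u v, pd_v (right_norm s e f g) u v}) \<le> 1"
  show "H u = 0"
  proof (rule ccontr)
    assume H: "H u \<noteq> 0"
    obtain c where c: "pd_u (right_norm s e f g) u v = - (H u *\<^sub>R pd_u (ruled_x s e) u v + c *\<^sub>R e u)"
      using pd_u_right_norm[OF u] .
    have "pd_v (right_norm s e f g) u v \<noteq> 0"
      using H unit_e[OF u] by (auto simp: pd_v_right_norm)
    from dim_span_pair_le_1_imp_in_span[OF rank this]
    obtain k where "pd_u (right_norm s e f g) u v = k *\<^sub>R pd_v (right_norm s e f g) u v"
      by (auto simp: span_singleton)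
    then have "pd_u (right_norm s e f g) u v \<bullet> rs_z e u = 0"
      by (simp add: pd_v_right_norm rs_z_def dot_cross_self)
    moreover have "pd_u (right_norm s e f g) u v \<bullet> rs_z e u = - H u * rs_delta s e u"
      using c pd_u_ruled_x_inner_rs_z[OF u]
      by (simp add: inner_add_left inner_diff_left rs_z_def dot_cross_self)
    ultimately show False using H skew[OF u] by simp
  qed
qed

end

theorem proposition3:
  fixes s e :: "real \<Rightarrow> real^3" and f g :: "real \<Rightarrow> real" and I :: "real set" and r :: nat
  assumes I: "open I" "is_interval I" "I \<noteq> {}"
    and r: "r \<ge> 3" "Ck_on r s I" "Ck_on r e I"
    and fg_smooth: "Ck_on 2 f I" "Ck_on 2 g I"
    and std: "\<forall>u\<in>I. norm (e u) = 1 \<and> norm (Dv e u) = 1 \<and> Dv s u \<bullet> Dv e u = 0"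
    and skew: "\<forall>u\<in>I. rs_delta s e u \<noteq> 0"
    and f_nz: "\<exists>u\<in>I. f u \<noteq> 0"
    and g_nz: "\<exists>u\<in>I. g u \<noteq> 0"
  shows "(degenerates_to_curve (right_norm s e f g) (I \<times> UNIV)
           \<longleftrightarrow> relatively_minimal (ruled_x s e) (right_norm s e f g) (I \<times> UNIV))
       \<and> (relatively_minimal (ruled_x s e) (right_norm s e f g) (I \<times> UNIV)
           \<longleftrightarrow> (\<exists>F c. (\<forall>u\<in>I. (F has_real_derivative (rs_kappa e u * f u / rs_delta s e u)) (at u))
                      \<and> (\<forall>u\<in>I. g u = F u + c)))"
proof -
  have C3: "Ck_on 3 s I" "Ck_on 3 e I" using Ck_on_mono[OF r(1)] r(2,3) by blast+
  interpret right_normalized_skew_ruled_surface e I s f g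
    using I(1) C3 Ck_on_mono[of 2 3, OF _ C3(2)] fg_smooth std skew by unfold_locales auto
  have degenerate: "degenerates_to_curve (right_norm s e f g) (I \<times> UNIV) \<longleftrightarrow> (\<forall>u\<in>I. H u = 0)"
    unfolding degenerates_to_curve_def using right_norm_rank_le_1_iff by auto
  have minimal: "relatively_minimal (ruled_x s e) (right_norm s e f g) (I \<times> UNIV) \<longleftrightarrow> (\<forall>u\<in>I. H u = 0)"
    unfolding relatively_minimal_def using rel_mean_curv_right_norm by auto
  have "H u = 0 \<longleftrightarrow> Dv g u = rs_kappa e u * f u / rs_delta s e u" if "u \<in> I" for u
    using skew that by (auto simp: right_norm_mean_curv_def field_simps power2_eq_square)
  then have "(\<forall>u\<in>I. H u = 0) \<longleftrightarrow> (\<forall>u\<in>I. Dv g u = rs_kappa e u * f u / rs_delta s e u)"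
    by auto
  with antiderivative_shift_iff[OF I(1) g_has_real_derivative] degenerate minimal
  show ?thesis by simp
qed

end
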